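(* Consider the discrete setting described in the context and let $(F^n)_{n\ge0}=(f^n_{ij},g^n_{ij})$ solve the linearized scheme given there. Let $h^n_{ij}=f^n_{ij}-g^n_{ij}$ and define the discrete moments $u^n_{h,i}=\sum_j\Delta v\,h^n_{ij}$, $J^n_{h,i}=\sum_j\Delta v\,v_j h^n_{ij}$, $S^n_{h,i}=\sum_j\Delta v\,(v_j^2-D_0^\Delta)h^n_{ij}$, and $J^n_{f,i}=\sum_j\Delta v\,v_jf^n_{ij}$, $J^n_{g,i}=\sum_j\Delta v\,v_jg^n_{ij}$. Then for all $n\ge0$: $$\|u^n_h\|_2=C_u^*\|\Pi^\Delta F^n\|_\Delta,\quad \|J^n_h\|_2\le C^*_{J1}\|F^n\|_\Delta,\quad \|J^n_h\|_2\le C^*_{J1}\|(I-\Pi^\Delta)F^n\|_\Delta,$$ $$\|S^n_h\|_2\le C^*_S\|(I-\Pi^\Delta)F^n\|_\Delta,\quad \|(\rho_\infty^* )^{-1}J^n_f-\rho_\infty^*J^n_g\|_2\le C^*_{J2}\|(I-\Pi^\Delta)F^n\|_\Delta,$$ where $C_u^*=\sqrt{((\rho_\infty^* )^2+1)/\rho_\infty^*}$, $C^*_{J1}=\sqrt{2\max(\rho_\infty^*\overline D_1,(\rho_\infty^* )^{-1}\overline D_2)}$, $C_S^*=\sqrt{2\max\big(\rho_\infty^*(\overline Q_1-2\underline D_0\underline D_1+\overline D_0^2),(\rho_\infty^* )^{-1}(\overline Q_2-2\underline D_0\underline D_2+\overline D_0^2)\big)}$, $C^*_{J2}=\max((\rho_\infty^*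 )^{-1},\rho_\infty^* )C^*_{J1}$.
   Context: Space mesh: $N$ uniform cells of length $\Delta x$ of the torus, indexed by $i\in\mathcal I=\mathbb Z/N\mathbb Z$ (periodic). Velocity mesh: $\Delta v=v^*/L$, cells indexed by $j\in\mathcal J=\{-L+1,\dots,L\}$ with midpoints $v_j=(j-\tfrac12)\Delta v$. Time step $\Delta t>0$; $\lambda=\Delta x/(2\Delta t)$ a fixed positive constant. Fixed $\rho_\infty^*>0$. For $k=1,2$: $\chi_{k,j}>0$, $\chi_{k,j}=\chi_{k,1-j}$, $\sum_j\Delta v\,\chi_{k,j}=1$, $0<\underline D_k\le D_k^\Delta:=\sum_j\Delta v\,v_j^2\chi_{k,j}\le\overline D_k$, $Q_k^\Delta:=\sum_j\Delta v\,v_j^4\chi_{k,j}\le\overline Q_k$. $D_0^\Delta=\frac{(\rho_\infty^* )^2D_1^\Delta+D_2^\Delta}{(\rho_\infty^* )^2+1}$, and $\underline D_0,\overline D_0$ are constants with $\underline D_0\le D_0^\Delta\le\overline D_0$. Densities $\rho_{f,i}=\sum_j\Delta v f_{ij}$, $\rho_{g,i}=\sum_j\Delta v g_{ij}$. Linearized scheme ($n\ge0$): $\frac{f^{n+1}_{ij}-f^n_{ij}}{\Delta t}+\frac{1}{\Delta x\Delta v}(\mathcal F^{n+1}_{i+\frac12,j}-\mathcal F^{n+1}_{i-\frac12,j})=-\rho_\infty^*\chi_{1,j}\rho^{n+1}_{g,i}-(\rho_\infty^* )^{-1}f^{n+1}_{ij}$ and $\frac{g^{n+1}_{ij}-g^n_{ij}}{\Delta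 t}+\frac{1}{\Delta x\Delta v}(\mathcal G^{n+1}_{i+\frac12,j}-\mathcal G^{n+1}_{i-\frac12,j})=-(\rho_\infty^* )^{-1}\chi_{2,j}\rho^{n+1}_{f,i}-\rho_\infty^*g^{n+1}_{ij}$, with $\mathcal F^{n+1}_{i+\frac12,j}=\Delta v\frac{v_j}{2}(f^{n+1}_{i+1,j}+f^{n+1}_{ij})-\Delta v\lambda(f^{n+1}_{i+1,j}-f^{n+1}_{ij})$ and $\mathcal G$ likewise with $g$. Norms: $\|u\|_2^2=\sum_i\Delta x\,u_i^2$; $\|F\|_\Delta^2=\sum_{i,j}\Delta x\Delta v\big(\frac{f_{ij}^2}{\chi_{1,j}\rho_\infty^*}+\frac{g_{ij}^2\rho_\infty^*}{\chi_{2,j}}\big)$. Projection: $(\Pi^\Delta F)_{ij}=\frac{\rho_{f,i}-\rho_{g,i}}{(\rho_\infty^* )^2+1}((\rho_\infty^* )^2\chi_{1,j},-\chi_{2,j})$. *)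

theory Defs
  imports Complex_Main
begin

definition Jset :: "nat \<Rightarrow> int set" where
  "Jset L = {- int L + 1 .. int L}"

definition vel :: "real \<Rightarrow> int \<Rightarrow> real" where
  "vel dv j = (real_of_int j - 1/2) * dv"

definition vsum :: "nat \<Rightarrow> real \<Rightarrow> (int \<Rightarrow> real) \<Rightarrow> real" where
  "vsum L dv \<phi> = (\<Sum>j\<in>Jset L. dv * \<phi> j)"

text \<open>Periodic neighbours on the torus Z/NZ, represented by {0..<N}.\<close>
definition nxt :: "nat \<Rightarrow> nat \<Rightarrow> nat" where
  "nxt N i = (Suc i) mod N"

definition prv :: "nat \<Rightarrow> nat \<Rightarrow> nat" where
  "prv N i = (i + N - 1) mod N"

definition flux :: "nat \<Rightarrow> real \<Rightarrow> real \<Rightarrow> (nat \<Rightarrow> int \<Rightarrow> real) \<Rightarrow> nat \<Rightarrow> int \<Rightarrow> real" where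
  "flux N dv lam \<phi> i j =
     dv * (vel dv j / 2) * (\<phi> (nxt N i) j + \<phi> i j) - dv * lam * (\<phi> (nxt N i) j - \<phi> i j)"

definition l2norm :: "nat \<Rightarrow> real \<Rightarrow> (nat \<Rightarrow> real) \<Rightarrow> real" where
  "l2norm N dx u = sqrt (\<Sum>i<N. dx * (u i)\<^sup>2)"

definition Dnorm :: "nat \<Rightarrow> nat \<Rightarrow> real \<Rightarrow> real \<Rightarrow> real \<Rightarrow> (int \<Rightarrow> real) \<Rightarrow> (int \<Rightarrow> real)
                    \<Rightarrow> (nat \<Rightarrow> int \<Rightarrow> real) \<Rightarrow> (nat \<Rightarrow> int \<Rightarrow> real) \<Rightarrow> real" where
  "Dnorm N L dx dv \<rho> \<chi>1 \<chi>2 f g =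
     sqrt (\<Sum>i<N. \<Sum>j\<in>Jset L. dx * dv * ((f i j)\<^sup>2 / (\<chi>1 j * \<rho>) + (g i j)\<^sup>2 * \<rho> / \<chi>2 j))"

definition Pi_f :: "nat \<Rightarrow> real \<Rightarrow> real \<Rightarrow> (int \<Rightarrow> real) \<Rightarrow> (nat \<Rightarrow> int \<Rightarrow> real) \<Rightarrow> (nat \<Rightarrow> int \<Rightarrow> real)
                    \<Rightarrow> nat \<Rightarrow> int \<Rightarrow> real" where
  "Pi_f L dv \<rho> \<chi>1 f g i j =
     (vsum L dv (f i) - vsum L dv (g i)) / (\<rho>\<^sup>2 + 1) * (\<rho>\<^sup>2 * \<chi>1 j)"

definition Pi_g :: "nat \<Rightarrow> real \<Rightarrow> real \<Rightarrow> (int \<Rightarrow> real) \<Rightarrow> (nat \<Rightarrow> int \<Rightarrow> real) \<Rightarrow> (nat \<Rightarrow> int \<Rightarrow> real)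
                    \<Rightarrow> nat \<Rightarrow> int \<Rightarrow> real" where
  "Pi_g L dv \<rho> \<chi>2 f g i j =
     (vsum L dv (f i) - vsum L dv (g i)) / (\<rho>\<^sup>2 + 1) * (- \<chi>2 j)"

end

(* Pi F depends on F only through rho_f - rho_g = u_h, and a direct computation gives
   ||Pi F||^2 = rho / (rho^2 + 1) ||u_h||^2.  Every other quantity is a velocity moment
   sum_j dv phi_j (c1 f_ij - c2 g_ij); the weighted Cauchy-Schwarz inequality with the
   weights rho chi_1 and chi_2 / rho of ||.||_Delta bounds it, for each cell i, by the
   contribution of that cell to ||F||_Delta^2.  Replacing F by (I - Pi) F changes none of
   the moments J_f, J_g, S_h: the first because the chi_k are even, the last because D_0
   is exactly the value with rho^2 (D_1 - D_0) + (D_2 - D_0) = 0. *)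
theory Submission
  imports Defs "HOL-Analysis.Analysis"
begin

lemma vsum_eq_mult_sum: "vsum L dv \<phi> = dv * (\<Sum>j\<in>Jset L. \<phi> j)"
  unfolding vsum_def by (simp add: sum_distrib_left)

lemma vsum_cong: "(\<And>j. j \<in> Jset L \<Longrightarrow> \<phi> j = \<psi> j) \<Longrightarrow> vsum L dv \<phi> = vsum L dv \<psi>"
  unfolding vsum_def by (auto intro: sum.cong)

lemma vsum_nonneg: "0 \<le> dv \<Longrightarrow> (\<And>j. j \<in> Jset L \<Longrightarrow> 0 \<le> \<phi> j) \<Longrightarrow> 0 \<le> vsum L dv \<phi>"
  unfolding vsum_def by (intro sum_nonneg) auto

lemma vsum_cmult: "vsum L dv (\<lambda>j. a * \<phi> j) = a * vsum L dv \<phi>"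
  unfolding vsum_def by (simp add: sum_distrib_left algebra_simps)

lemma vsum_add: "vsum L dv (\<lambda>j. \<phi> j + \<psi> j) = vsum L dv \<phi> + vsum L dv \<psi>"
  unfolding vsum_def by (simp add: sum.distrib algebra_simps)

lemma vsum_diff: "vsum L dv (\<lambda>j. \<phi> j - \<psi> j) = vsum L dv \<phi> - vsum L dv \<psi>"
  unfolding vsum_def by (simp add: sum_subtractf algebra_simps)

lemma vsum_mult_diff:
  "vsum L dv (\<lambda>j. \<phi> j * (x j - y j)) = vsum L dv (\<lambda>j. \<phi> j * x j) - vsum L dv (\<lambda>j. \<phi> j * y j)"
  by (simp add: right_diff_distrib vsum_diff)

lemma sum_weighted_Cauchy_Schwarz:
  fixes \<phi> x w :: "'a \<Rightarrow> real"
  assumes "\<And>j. j \<in> S \<Longrightarrow> 0 < w j"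
  shows "(\<Sum>j\<in>S. \<phi> j * x j)\<^sup>2 \<le> (\<Sum>j\<in>S. (\<phi> j)\<^sup>2 * w j) * (\<Sum>j\<in>S. (x j)\<^sup>2 / w j)"
proof -
  have "(\<Sum>j\<in>S. \<phi> j * x j) = (\<Sum>j\<in>S. (sqrt (w j) * \<phi> j) * (x j / sqrt (w j)))"
    by (intro sum.cong refl) (auto dest!: assms)
  moreover have "(\<Sum>j\<in>S. (\<phi> j)\<^sup>2 * w j) = (\<Sum>j\<in>S. (sqrt (w j) * \<phi> j)\<^sup>2)"
    by (intro sum.cong refl) (auto dest!: assms simp: power_mult_distrib)
  moreover have "(\<Sum>j\<in>S. (x j)\<^sup>2 / w j) = (\<Sum>j\<in>S. (x j / sqrt (w j))\<^sup>2)"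
    by (intro sum.cong refl) (auto dest!: assms simp: power_divide)
  ultimately show ?thesis by (simp only: Cauchy_Schwarz_ineq_sum)
qed

lemma vsum_weighted_Cauchy_Schwarz:
  assumes "\<And>j. j \<in> Jset L \<Longrightarrow> 0 < w j"
  shows "(vsum L dv (\<lambda>j. \<phi> j * x j))\<^sup>2
           \<le> vsum L dv (\<lambda>j. (\<phi> j)\<^sup>2 * w j) * vsum L dv (\<lambda>j. (x j)\<^sup>2 / w j)"
proof -
  have "(\<Sum>j\<in>Jset L. \<phi> j * x j)\<^sup>2
          \<le> (\<Sum>j\<in>Jset L. (\<phi> j)\<^sup>2 * w j) * (\<Sum>j\<in>Jset L. (x j)\<^sup>2 / w j)"
    using assms by (rule sum_weighted_Cauchy_Schwarz)
  then have "dv\<^sup>2 * (\<Sum>j\<in>Jset L. \<phi> j * x j)\<^sup>2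
          \<le> dv\<^sup>2 * ((\<Sum>j\<in>Jset L. (\<phi> j)\<^sup>2 * w j) * (\<Sum>j\<in>Jset L. (x j)\<^sup>2 / w j))"
    by (rule mult_left_mono) simp
  then show ?thesis by (simp add: vsum_eq_mult_sum power_mult_distrib power2_eq_square mult_ac)
qed

lemma sq_combination_le:
  fixes a b A B M c c1 c2 :: real
  assumes "a\<^sup>2 \<le> M * A" "b\<^sup>2 \<le> M * B" "\<bar>c1\<bar> \<le> c" "\<bar>c2\<bar> \<le> c"
  shows "(c1 * a - c2 * b)\<^sup>2 \<le> c\<^sup>2 * (2 * M) * (A + B)"
proof -
  have "0 \<le> c" using assms(3) by linarith
  then have c_sq: "c1\<^sup>2 \<le> c\<^sup>2" "c2\<^sup>2 \<le> c\<^sup>2"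
    using assms(3,4) by (metis abs_le_square_iff abs_of_nonneg)+
  have "(c1 * a - c2 * b)\<^sup>2 \<le> 2 * ((c1 * a)\<^sup>2 + (c2 * b)\<^sup>2)"
    using zero_le_power2[of "c1 * a + c2 * b"] by (simp add: power2_eq_square algebra_simps)
  also have "\<dots> = 2 * (c1\<^sup>2 * a\<^sup>2 + c2\<^sup>2 * b\<^sup>2)" by (simp add: power_mult_distrib)
  also have "\<dots> \<le> 2 * (c\<^sup>2 * (M * A) + c\<^sup>2 * (M * B))"
    using assms(1,2) c_sq by (intro mult_left_mono add_mono mult_mono) auto
  finally show ?thesis by (simp add: algebra_simps)
qed

lemma l2norm_le_sqrt_mult:
  assumes "0 \<le> dx" "0 \<le> K" "\<And>i. i < N \<Longrightarrow> (p i)\<^sup>2 \<le> K * E i"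
  shows "l2norm N dx p \<le> sqrt K * sqrt (\<Sum>i<N. dx * E i)"
proof -
  have "(\<Sum>i<N. dx * (p i)\<^sup>2) \<le> (\<Sum>i<N. K * (dx * E i))"
    using assms by (intro sum_mono) (simp add: mult.left_commute[of K] mult_left_mono)
  also have "\<dots> = K * (\<Sum>i<N. dx * E i)" by (simp add: sum_distrib_left)
  finally show ?thesis unfolding l2norm_def by (metis real_sqrt_le_mono real_sqrt_mult)
qed

lemma Dnorm_eq_vsum:
  "Dnorm N L dx dv \<rho> \<chi>1 \<chi>2 f g
     = sqrt (\<Sum>i<N. dx * (vsum L dv (\<lambda>j. (f i j)\<^sup>2 / (\<chi>1 j * \<rho>))
                             + vsum L dv (\<lambda>j. (g i j)\<^sup>2 * \<rho> / \<chi>2 j)))"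
  unfolding Dnorm_def vsum_def by (simp add: sum_distrib_left sum.distrib algebra_simps)

lemma l2norm_moment_combination_le:
  fixes f g :: "nat \<Rightarrow> int \<Rightarrow> real"
  assumes dv: "0 \<le> dv" and dx: "0 \<le> dx" and rho: "0 < \<rho>"
    and chi1: "\<forall>j\<in>Jset L. 0 < \<chi>1 j" and chi2: "\<forall>j\<in>Jset L. 0 < \<chi>2 j"
    and c: "\<bar>c1\<bar> \<le> c" "\<bar>c2\<bar> \<le> c"
    and M1: "\<rho> * vsum L dv (\<lambda>j. (\<phi> j)\<^sup>2 * \<chi>1 j) \<le> M"
    and M2: "inverse \<rho> * vsum L dv (\<lambda>j. (\<phi> j)\<^sup>2 * \<chi>2 j) \<le> M"
  shows "l2norm N dx (\<lambda>i. c1 * vsum L dv (\<lambda>j. \<phi> j * f i j)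
                           - c2 * vsum L dv (\<lambda>j. \<phi> j * g i j))
           \<le> c * sqrt (2 * M) * Dnorm N L dx dv \<rho> \<chi>1 \<chi>2 f g"
proof -
  define A where "A i = vsum L dv (\<lambda>j. (f i j)\<^sup>2 / (\<chi>1 j * \<rho>))" for i
  define B where "B i = vsum L dv (\<lambda>j. (g i j)\<^sup>2 * \<rho> / \<chi>2 j)" for i
  have A_nonneg: "0 \<le> A i" and B_nonneg: "0 \<le> B i" for i
    unfolding A_def B_def using dv chi1 chi2 rho by (auto intro!: vsum_nonneg)
  have "0 \<le> \<rho> * vsum L dv (\<lambda>j. (\<phi> j)\<^sup>2 * \<chi>1 j)"
    using dv chi1 rho by (intro mult_nonneg_nonneg vsum_nonneg) auto
  then have M_nonneg: "0 \<le> M" using M1 by linarith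
  have f_moment: "(vsum L dv (\<lambda>j. \<phi> j * f i j))\<^sup>2 \<le> M * A i" for i
  proof -
    have "(vsum L dv (\<lambda>j. \<phi> j * f i j))\<^sup>2 \<le> vsum L dv (\<lambda>j. (\<phi> j)\<^sup>2 * (\<chi>1 j * \<rho>)) * A i"
      unfolding A_def using chi1 rho by (intro vsum_weighted_Cauchy_Schwarz) auto
    also have "vsum L dv (\<lambda>j. (\<phi> j)\<^sup>2 * (\<chi>1 j * \<rho>)) = \<rho> * vsum L dv (\<lambda>j. (\<phi> j)\<^sup>2 * \<chi>1 j)"
      using vsum_cmult[of L dv \<rho> "\<lambda>j. (\<phi> j)\<^sup>2 * \<chi>1 j"] by (simp add: mult_ac)
    also have "\<dots> * A i \<le> M * A i" using M1 A_nonneg by (rule mult_right_mono)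
    finally show ?thesis .
  qed
  have g_moment: "(vsum L dv (\<lambda>j. \<phi> j * g i j))\<^sup>2 \<le> M * B i" for i
  proof -
    have "(vsum L dv (\<lambda>j. \<phi> j * g i j))\<^sup>2
            \<le> vsum L dv (\<lambda>j. (\<phi> j)\<^sup>2 * (\<chi>2 j / \<rho>)) * vsum L dv (\<lambda>j. (g i j)\<^sup>2 / (\<chi>2 j / \<rho>))"
      using chi2 rho by (intro vsum_weighted_Cauchy_Schwarz) auto
    also have "vsum L dv (\<lambda>j. (\<phi> j)\<^sup>2 * (\<chi>2 j / \<rho>)) = inverse \<rho> * vsum L dv (\<lambda>j. (\<phi> j)\<^sup>2 * \<chi>2 j)"
      using vsum_cmult[of L dv "inverse \<rho>" "\<lambda>j. (\<phi> j)\<^sup>2 * \<chi>2 j"] by (simp add: field_simps)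
    also have "vsum L dv (\<lambda>j. (g i j)\<^sup>2 / (\<chi>2 j / \<rho>)) = B i" by (simp add: B_def)
    also have "inverse \<rho> * vsum L dv (\<lambda>j. (\<phi> j)\<^sup>2 * \<chi>2 j) * B i \<le> M * B i"
      using M2 B_nonneg by (rule mult_right_mono)
    finally show ?thesis .
  qed
  have "l2norm N dx (\<lambda>i. c1 * vsum L dv (\<lambda>j. \<phi> j * f i j) - c2 * vsum L dv (\<lambda>j. \<phi> j * g i j))
          \<le> sqrt (c\<^sup>2 * (2 * M)) * Dnorm N L dx dv \<rho> \<chi>1 \<chi>2 f g"
    unfolding Dnorm_eq_vsum A_def[symmetric] B_def[symmetric]
    using dx M_nonneg f_moment g_moment c by (intro l2norm_le_sqrt_mult sq_combination_le) auto
  also have "sqrt (c\<^sup>2 * (2 * M)) = c * sqrt (2 * M)"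
    using c by (simp add: real_sqrt_mult)
  finally show ?thesis .
qed

lemma l2norm_moment_diff_le:
  fixes f g :: "nat \<Rightarrow> int \<Rightarrow> real"
  assumes "0 \<le> dv" "0 \<le> dx" "0 < \<rho>"
    and "\<forall>j\<in>Jset L. 0 < \<chi>1 j" "\<forall>j\<in>Jset L. 0 < \<chi>2 j"
    and "\<rho> * vsum L dv (\<lambda>j. (\<phi> j)\<^sup>2 * \<chi>1 j) \<le> M"
    and "inverse \<rho> * vsum L dv (\<lambda>j. (\<phi> j)\<^sup>2 * \<chi>2 j) \<le> M"
  shows "l2norm N dx (\<lambda>i. vsum L dv (\<lambda>j. \<phi> j * (f i j - g i j)))
           \<le> sqrt (2 * M) * Dnorm N L dx dv \<rho> \<chi>1 \<chi>2 f g"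
  using l2norm_moment_combination_le[OF assms(1-5) _ _ assms(6,7), of 1 1 1 N f g]
  by (simp add: vsum_mult_diff)

lemma vsum_vel_mult_eq_0:
  assumes "\<forall>j\<in>Jset L. w j = w (1 - j)"
  shows "vsum L dv (\<lambda>j. vel dv j * w j) = 0"
proof -
  let ?F = "\<lambda>j. dv * (vel dv j * w j)"
  have "(\<Sum>j\<in>Jset L. ?F j) = (\<Sum>j\<in>Jset L. ?F (1 - j))"
    by (rule sum.reindex_bij_witness[of _ "\<lambda>j. 1 - j" "\<lambda>j. 1 - j"]) (auto simp: Jset_def)
  also have "\<dots> = (\<Sum>j\<in>Jset L. - ?F j)"
    using assms by (intro sum.cong) (auto simp: vel_def algebra_simps)
  finally show ?thesis unfolding vsum_def by (simp add: sum_negf)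
qed

lemma vsum_mult_Pi_f:
  "vsum L dv (\<lambda>j. \<phi> j * Pi_f L dv \<rho> \<chi>1 f g i j)
     = (vsum L dv (f i) - vsum L dv (g i)) / (\<rho>\<^sup>2 + 1) * \<rho>\<^sup>2 * vsum L dv (\<lambda>j. \<phi> j * \<chi>1 j)"
  unfolding Pi_f_def
  using vsum_cmult[of L dv "(vsum L dv (f i) - vsum L dv (g i)) / (\<rho>\<^sup>2 + 1) * \<rho>\<^sup>2" "\<lambda>j. \<phi> j * \<chi>1 j"]
  by (simp add: mult_ac)

lemma vsum_mult_Pi_g:
  "vsum L dv (\<lambda>j. \<phi> j * Pi_g L dv \<rho> \<chi>2 f g i j)
     = - ((vsum L dv (f i) - vsum L dv (g i)) / (\<rho>\<^sup>2 + 1) * vsum L dv (\<lambda>j. \<phi> j * \<chi>2 j))"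
  unfolding Pi_g_def
  using vsum_cmult[of L dv "- ((vsum L dv (f i) - vsum L dv (g i)) / (\<rho>\<^sup>2 + 1))" "\<lambda>j. \<phi> j * \<chi>2 j"]
  by (simp add: mult_ac)

lemma vsum_mult_sub_Pi_f:
  assumes "vsum L dv (\<lambda>j. \<phi> j * \<chi>1 j) = 0"
  shows "vsum L dv (\<lambda>j. \<phi> j * (f i j - Pi_f L dv \<rho> \<chi>1 f g i j)) = vsum L dv (\<lambda>j. \<phi> j * f i j)"
  by (simp add: vsum_mult_diff vsum_mult_Pi_f assms)

lemma vsum_mult_sub_Pi_g:
  assumes "vsum L dv (\<lambda>j. \<phi> j * \<chi>2 j) = 0"
  shows "vsum L dv (\<lambda>j. \<phi> j * (g i j - Pi_g L dv \<rho> \<chi>2 f g i j)) = vsum L dv (\<lambda>j. \<phi> j * g i j)"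
  by (simp add: vsum_mult_diff vsum_mult_Pi_g assms)

lemma vsum_mult_diff_sub_Pi:
  assumes "\<rho>\<^sup>2 * vsum L dv (\<lambda>j. \<phi> j * \<chi>1 j) + vsum L dv (\<lambda>j. \<phi> j * \<chi>2 j) = 0"
  shows "vsum L dv (\<lambda>j. \<phi> j * ((f i j - Pi_f L dv \<rho> \<chi>1 f g i j)
                                  - (g i j - Pi_g L dv \<rho> \<chi>2 f g i j)))
           = vsum L dv (\<lambda>j. \<phi> j * (f i j - g i j))"
proof -
  have "vsum L dv (\<lambda>j. \<phi> j * Pi_f L dv \<rho> \<chi>1 f g i j) - vsum L dv (\<lambda>j. \<phi> j * Pi_g L dv \<rho> \<chi>2 f g i j)
          = (vsum L dv (f i) - vsum L dv (g i)) / (\<rho>\<^sup>2 + 1)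
            * (\<rho>\<^sup>2 * vsum L dv (\<lambda>j. \<phi> j * \<chi>1 j) + vsum L dv (\<lambda>j. \<phi> j * \<chi>2 j))"
    unfolding vsum_mult_Pi_f vsum_mult_Pi_g by (simp add: algebra_simps)
  then show ?thesis by (simp add: vsum_mult_diff assms)
qed

(* D0 is defined precisely so that v^2 - D0 satisfies the hypothesis of vsum_mult_diff_sub_Pi. *)
lemma vsum_centered_balance:
  fixes \<rho> :: real
  assumes "vsum L dv \<chi>1 = 1" "vsum L dv \<chi>2 = 1"
    and "D0 = (\<rho>\<^sup>2 * vsum L dv (\<lambda>j. \<psi> j * \<chi>1 j) + vsum L dv (\<lambda>j. \<psi> j * \<chi>2 j)) / (\<rho>\<^sup>2 + 1)"
  shows "\<rho>\<^sup>2 * vsum L dv (\<lambda>j. (\<psi> j - D0) * \<chi>1 j) + vsum L dv (\<lambda>j. (\<psi> j - D0) * \<chi>2 j) = 0"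
proof -
  have "\<rho>\<^sup>2 + 1 \<noteq> 0" using zero_le_power2[of \<rho>] by linarith
  then have "(\<rho>\<^sup>2 + 1) * D0 = \<rho>\<^sup>2 * vsum L dv (\<lambda>j. \<psi> j * \<chi>1 j) + vsum L dv (\<lambda>j. \<psi> j * \<chi>2 j)"
    using assms(3) by simp
  then show ?thesis
    using assms(1,2) by (simp add: left_diff_distrib vsum_diff vsum_cmult algebra_simps)
qed

lemma vsum_sq_diff_expand:
  "vsum L dv (\<lambda>j. (\<psi> j - D)\<^sup>2 * w j)
     = vsum L dv (\<lambda>j. (\<psi> j)\<^sup>2 * w j) - 2 * D * vsum L dv (\<lambda>j. \<psi> j * w j) + D\<^sup>2 * vsum L dv w"
proof -
  have "vsum L dv (\<lambda>j. (\<psi> j - D)\<^sup>2 * w j)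
          = vsum L dv (\<lambda>j. (\<psi> j)\<^sup>2 * w j - (2 * D) * (\<psi> j * w j) + D\<^sup>2 * w j)"
    by (simp add: power2_diff algebra_simps)
  then show ?thesis by (simp only: vsum_add vsum_diff vsum_cmult)
qed

lemma vsum_centered_sq_vel_le:
  assumes "vsum L dv w = 1" "vsum L dv (\<lambda>j. (vel dv j)^4 * w j) \<le> Qup"
    and "0 \<le> Dlo" "Dlo \<le> vsum L dv (\<lambda>j. (vel dv j)\<^sup>2 * w j)"
    and "0 \<le> D0" "D0lo \<le> D0" "D0 \<le> D0up"
  shows "vsum L dv (\<lambda>j. ((vel dv j)\<^sup>2 - D0)\<^sup>2 * w j) \<le> Qup - 2 * D0lo * Dlo + D0up\<^sup>2"
proof -
  have "D0lo * Dlo \<le> D0 * vsum L dv (\<lambda>j. (vel dv j)\<^sup>2 * w j)"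
  proof (cases "D0lo \<le> 0")
    case True
    then have "D0lo * Dlo \<le> 0" using assms(3) by (rule mult_nonpos_nonneg)
    moreover have "0 \<le> D0 * vsum L dv (\<lambda>j. (vel dv j)\<^sup>2 * w j)" using assms(3-5) by simp
    ultimately show ?thesis by linarith
  next
    case False
    then show ?thesis using assms(3,4,6) by (intro mult_mono) auto
  qed
  moreover have "D0\<^sup>2 \<le> D0up\<^sup>2" by (rule power_mono[OF assms(7,5)])
  ultimately show ?thesis
    using assms(1,2) by (simp add: vsum_sq_diff_expand[where \<psi>="\<lambda>j. (vel dv j)\<^sup>2"] flip: power_mult)
qed

lemma l2norm_density_diff_eq_Dnorm_Pi:
  fixes \<rho> :: real
  assumes rho: "0 < \<rho>" and chi1: "\<forall>j\<in>Jset L. 0 < \<chi>1 j" and chi2: "\<forall>j\<in>Jset L. 0 < \<chi>2 j"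
    and mass1: "vsum L dv \<chi>1 = 1" and mass2: "vsum L dv \<chi>2 = 1"
  shows "l2norm N dx (\<lambda>i. vsum L dv (\<lambda>j. f i j - g i j))
           = sqrt ((\<rho>\<^sup>2 + 1) / \<rho>)
             * Dnorm N L dx dv \<rho> \<chi>1 \<chi>2 (Pi_f L dv \<rho> \<chi>1 f g) (Pi_g L dv \<rho> \<chi>2 f g)"
proof -
  have rho2: "0 < \<rho>\<^sup>2 + 1" using zero_le_power2[of \<rho>] by linarith
  define a where "a i = (vsum L dv (f i) - vsum L dv (g i)) / (\<rho>\<^sup>2 + 1)" for i
  have Pi_f_part: "vsum L dv (\<lambda>j. (Pi_f L dv \<rho> \<chi>1 f g i j)\<^sup>2 / (\<chi>1 j * \<rho>)) = (a i)\<^sup>2 * \<rho>^3" for i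
  proof -
    have "vsum L dv (\<lambda>j. (Pi_f L dv \<rho> \<chi>1 f g i j)\<^sup>2 / (\<chi>1 j * \<rho>)) = vsum L dv (\<lambda>j. ((a i)\<^sup>2 * \<rho>^3) * \<chi>1 j)"
      unfolding Pi_f_def a_def[symmetric] using chi1 rho
      by (intro vsum_cong) (simp add: field_simps power2_eq_square power3_eq_cube)
    then show ?thesis by (simp add: vsum_cmult mass1)
  qed
  have Pi_g_part: "vsum L dv (\<lambda>j. (Pi_g L dv \<rho> \<chi>2 f g i j)\<^sup>2 * \<rho> / \<chi>2 j) = (a i)\<^sup>2 * \<rho>" for i
  proof -
    have "vsum L dv (\<lambda>j. (Pi_g L dv \<rho> \<chi>2 f g i j)\<^sup>2 * \<rho> / \<chi>2 j) = vsum L dv (\<lambda>j. ((a i)\<^sup>2 * \<rho>) * \<chi>2 j)"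
      unfolding Pi_g_def a_def[symmetric] using chi2
      by (intro vsum_cong) (simp add: field_simps power2_eq_square)
    then show ?thesis by (simp add: vsum_cmult mass2)
  qed
  have cancel: "\<rho> * K * (x / K)\<^sup>2 = \<rho> / K * x\<^sup>2" if "K \<noteq> 0" for x K :: real
    using that by (simp add: power2_eq_square field_simps)
  have "(a i)\<^sup>2 * \<rho>^3 + (a i)\<^sup>2 * \<rho> = \<rho> / (\<rho>\<^sup>2 + 1) * (vsum L dv (\<lambda>j. f i j - g i j))\<^sup>2" for i
  proof -
    have "(a i)\<^sup>2 * \<rho>^3 + (a i)\<^sup>2 * \<rho> = \<rho> * (\<rho>\<^sup>2 + 1) * (a i)\<^sup>2"
      by (simp add: algebra_simps power2_eq_square power3_eq_cube)
    then show ?thesis using cancel rho2 by (simp add: a_def vsum_diff)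
  qed
  then have "Dnorm N L dx dv \<rho> \<chi>1 \<chi>2 (Pi_f L dv \<rho> \<chi>1 f g) (Pi_g L dv \<rho> \<chi>2 f g)
               = sqrt (\<rho> / (\<rho>\<^sup>2 + 1) * (\<Sum>i<N. dx * (vsum L dv (\<lambda>j. f i j - g i j))\<^sup>2))"
    unfolding Dnorm_eq_vsum Pi_f_part Pi_g_part by (simp add: sum_distrib_left mult_ac)
  also have "\<dots> = sqrt (\<rho> / (\<rho>\<^sup>2 + 1)) * l2norm N dx (\<lambda>i. vsum L dv (\<lambda>j. f i j - g i j))"
    unfolding l2norm_def by (rule real_sqrt_mult)
  finally show ?thesis
    using rho rho2 by (simp add: real_sqrt_divide field_simps)
qed

theorem lemma4p3:
  fixes N L :: nat
    and dx dt vstar dv lam \<rho> :: real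
    and \<chi>1 \<chi>2 :: "int \<Rightarrow> real"
    and D1lo D1up D2lo D2up Q1up Q2up D0lo D0up :: real
    and f g :: "nat \<Rightarrow> nat \<Rightarrow> int \<Rightarrow> real"
    and n :: nat
  defines "D1 \<equiv> vsum L dv (\<lambda>j. (vel dv j)\<^sup>2 * \<chi>1 j)"
    and "D2 \<equiv> vsum L dv (\<lambda>j. (vel dv j)\<^sup>2 * \<chi>2 j)"
    and "Q1 \<equiv> vsum L dv (\<lambda>j. (vel dv j)^4 * \<chi>1 j)"
    and "Q2 \<equiv> vsum L dv (\<lambda>j. (vel dv j)^4 * \<chi>2 j)"
    and "D0 \<equiv> (\<rho>\<^sup>2 * vsum L dv (\<lambda>j. (vel dv j)\<^sup>2 * \<chi>1 j)
                 + vsum L dv (\<lambda>j. (vel dv j)\<^sup>2 * \<chi>2 j)) / (\<rho>\<^sup>2 + 1)"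
  assumes N_pos: "0 < N"
    and dx_pos: "0 < dx"
    and L_pos: "0 < L"
    and vstar_pos: "0 < vstar"
    and dv_def: "dv = vstar / real L"
    and dt_pos: "0 < dt"
    and lam_def: "lam = dx / (2 * dt)"
    and rho_pos: "0 < \<rho>"
    and chi1_pos: "\<forall>j\<in>Jset L. 0 < \<chi>1 j"
    and chi2_pos: "\<forall>j\<in>Jset L. 0 < \<chi>2 j"
    and chi1_sym: "\<forall>j\<in>Jset L. \<chi>1 j = \<chi>1 (1 - j)"
    and chi2_sym: "\<forall>j\<in>Jset L. \<chi>2 j = \<chi>2 (1 - j)"
    and chi1_mass: "vsum L dv \<chi>1 = 1"
    and chi2_mass: "vsum L dv \<chi>2 = 1"
    and D1_bounds: "0 < D1lo" "D1lo \<le> D1" "D1 \<le> D1up"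
    and D2_bounds: "0 < D2lo" "D2lo \<le> D2" "D2 \<le> D2up"
    and Q1_bound: "Q1 \<le> Q1up"
    and Q2_bound: "Q2 \<le> Q2up"
    and D0_bounds: "D0lo \<le> D0" "D0 \<le> D0up"
    and scheme_f: "\<forall>m i j. i < N \<longrightarrow> j \<in> Jset L \<longrightarrow>
        (f (Suc m) i j - f m i j) / dt
        + (flux N dv lam (f (Suc m)) i j - flux N dv lam (f (Suc m)) (prv N i) j) / (dx * dv)
        = - \<rho> * \<chi>1 j * vsum L dv (g (Suc m) i) - inverse \<rho> * f (Suc m) i j"
    and scheme_g: "\<forall>m i j. i < N \<longrightarrow> j \<in> Jset L \<longrightarrow>
        (g (Suc m) i j - g m i j) / dt
        + (flux N dv lam (g (Suc m)) i j - flux N dv lam (g (Suc m)) (prv N i) j) / (dx * dv)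
        = - inverse \<rho> * \<chi>2 j * vsum L dv (f (Suc m) i) - \<rho> * g (Suc m) i j"
  shows
   "let h = (\<lambda>i j. f n i j - g n i j);
        uh = (\<lambda>i. vsum L dv (h i));
        Jh = (\<lambda>i. vsum L dv (\<lambda>j. vel dv j * h i j));
        Sh = (\<lambda>i. vsum L dv (\<lambda>j. ((vel dv j)\<^sup>2 - D0) * h i j));
        Jf = (\<lambda>i. vsum L dv (\<lambda>j. vel dv j * f n i j));
        Jg = (\<lambda>i. vsum L dv (\<lambda>j. vel dv j * g n i j));
        PF = Dnorm N L dx dv \<rho> \<chi>1 \<chi>2 (Pi_f L dv \<rho> \<chi>1 (f n) (g n)) (Pi_g L dv \<rho> \<chi>2 (f n) (g n));
        FF = Dnorm N L dx dv \<rho> \<chi>1 \<chi>2 (f n) (g n);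
        QF = Dnorm N L dx dv \<rho> \<chi>1 \<chi>2
               (\<lambda>i j. f n i j - Pi_f L dv \<rho> \<chi>1 (f n) (g n) i j)
               (\<lambda>i j. g n i j - Pi_g L dv \<rho> \<chi>2 (f n) (g n) i j);
        Cu = sqrt ((\<rho>\<^sup>2 + 1) / \<rho>);
        CJ1 = sqrt (2 * max (\<rho> * D1up) (inverse \<rho> * D2up));
        CS = sqrt (2 * max (\<rho> * (Q1up - 2 * D0lo * D1lo + D0up\<^sup>2))
                           (inverse \<rho> * (Q2up - 2 * D0lo * D2lo + D0up\<^sup>2)));
        CJ2 = max (inverse \<rho>) \<rho> * CJ1
    in l2norm N dx uh = Cu * PF
     \<and> l2norm N dx Jh \<le> CJ1 * FF
     \<and> l2norm N dx Jh \<le> CJ1 * QF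
     \<and> l2norm N dx Sh \<le> CS * QF
     \<and> l2norm N dx (\<lambda>i. inverse \<rho> * Jf i - \<rho> * Jg i) \<le> CJ2 * QF"
proof -
  have dv: "0 \<le> dv" and dx: "0 \<le> dx" using dv_def vstar_pos dx_pos by simp_all
  let ?f' = "\<lambda>i j. f n i j - Pi_f L dv \<rho> \<chi>1 (f n) (g n) i j"
  let ?g' = "\<lambda>i j. g n i j - Pi_g L dv \<rho> \<chi>2 (f n) (g n) i j"
  define MJ where "MJ = max (\<rho> * D1up) (inverse \<rho> * D2up)"
  have MJ: "\<rho> * vsum L dv (\<lambda>j. (vel dv j)\<^sup>2 * \<chi>1 j) \<le> MJ"
    "inverse \<rho> * vsum L dv (\<lambda>j. (vel dv j)\<^sup>2 * \<chi>2 j) \<le> MJ"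
    unfolding MJ_def D1_def[symmetric] D2_def[symmetric] using D1_bounds D2_bounds rho_pos
    by (simp_all add: max.coboundedI1 max.coboundedI2)
  have "0 \<le> D0" unfolding D0_def D1_def[symmetric] D2_def[symmetric]
    using D1_bounds D2_bounds by simp
  define MS where "MS = max (\<rho> * (Q1up - 2 * D0lo * D1lo + D0up\<^sup>2))
                            (inverse \<rho> * (Q2up - 2 * D0lo * D2lo + D0up\<^sup>2))"
  have MS: "\<rho> * vsum L dv (\<lambda>j. ((vel dv j)\<^sup>2 - D0)\<^sup>2 * \<chi>1 j) \<le> MS"
    "inverse \<rho> * vsum L dv (\<lambda>j. ((vel dv j)\<^sup>2 - D0)\<^sup>2 * \<chi>2 j) \<le> MS"
    using vsum_centered_sq_vel_le[OF chi1_mass Q1_bound[unfolded Q1_def] _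
          D1_bounds(2)[unfolded D1_def] \<open>0 \<le> D0\<close> D0_bounds]
      vsum_centered_sq_vel_le[OF chi2_mass Q2_bound[unfolded Q2_def] _
          D2_bounds(2)[unfolded D2_def] \<open>0 \<le> D0\<close> D0_bounds]
      D1_bounds D2_bounds rho_pos
    unfolding MS_def by (auto intro: max.coboundedI1 max.coboundedI2 mult_left_mono)
  have vel_odd: "vsum L dv (\<lambda>j. vel dv j * \<chi>1 j) = 0" "vsum L dv (\<lambda>j. vel dv j * \<chi>2 j) = 0"
    using chi1_sym chi2_sym by (simp_all add: vsum_vel_mult_eq_0)
  have centered: "\<rho>\<^sup>2 * vsum L dv (\<lambda>j. ((vel dv j)\<^sup>2 - D0) * \<chi>1 j)
                    + vsum L dv (\<lambda>j. ((vel dv j)\<^sup>2 - D0) * \<chi>2 j) = 0"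
    by (rule vsum_centered_balance[OF chi1_mass chi2_mass D0_def[THEN meta_eq_to_obj_eq]])
  have J_moment: "vsum L dv (\<lambda>j. vel dv j * (?f' i j - ?g' i j))
                    = vsum L dv (\<lambda>j. vel dv j * (f n i j - g n i j))"
    and S_moment: "vsum L dv (\<lambda>j. ((vel dv j)\<^sup>2 - D0) * (?f' i j - ?g' i j))
                     = vsum L dv (\<lambda>j. ((vel dv j)\<^sup>2 - D0) * (f n i j - g n i j))" for i
    using vsum_mult_diff_sub_Pi[where \<rho>=\<rho> and \<phi>="vel dv"] vsum_mult_diff_sub_Pi[OF centered]
    by (simp_all add: vel_odd)
  note moment_le = l2norm_moment_diff_le[OF dv dx rho_pos chi1_pos chi2_pos]
  show ?thesis
    unfolding Let_def
    using l2norm_density_diff_eq_Dnorm_Pi[OF rho_pos chi1_pos chi2_pos chi1_mass chi2_mass]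
      moment_le[OF MJ, of N "f n" "g n"] moment_le[OF MJ, of N ?f' ?g'] moment_le[OF MS, of N ?f' ?g']
      l2norm_moment_combination_le[OF dv dx rho_pos chi1_pos chi2_pos _ _ MJ,
        of "inverse \<rho>" "max (inverse \<rho>) \<rho>" \<rho> N ?f' ?g']
      rho_pos
    by (simp add: MJ_def MS_def J_moment S_moment vsum_mult_sub_Pi_f vsum_mult_sub_Pi_g vel_odd)
qed

end
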